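(* Let $\sigma>0$, $\varepsilon>0$, $D=\ln(1/\varepsilon)+n\ln 8$, and $I=\{x\in(\mathbb{N}\cup\{0\})^n:\sum_{j=1}^n u(x_j)<D\}$. Then $$|I|\le\sum_{q=0}^n 2^{n-q}\binom{n}{n-q}\mathrm{Vol}(X_q),$$ where $X_q=\{x\in[0,+\infty)^q:\sum_{j=1}^q u(x_j)<D-(n-q)\Delta(\sigma)\}$ and $\mathrm{Vol}$ is $q$-dimensional Lebesgue measure.
   Context: $u(x)=\frac{x}{2}\ln\big(\frac{2}{e}x\big)-x\ln\sigma$ for $x>0$, $u(0)=0$; $r=\lfloor\sigma^2/2\rfloor$; $\Delta(\sigma)=\min\{u(r),u(r+1)\}$. *)

theory Defs
  imports "HOL-Analysis.Analysis"
begin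

definition u :: "real \<Rightarrow> real \<Rightarrow> real" where
  "u \<sigma> x = (if x = 0 then 0 else x / 2 * ln (2 / exp 1 * x) - x * ln \<sigma>)"

definition Delta :: "real \<Rightarrow> real" where
  "Delta \<sigma> = (let r = real_of_int \<lfloor>\<sigma>\<^sup>2 / 2\<rfloor> in min (u \<sigma> r) (u \<sigma> (r + 1)))"

end

(*
  On [0, oo) the function u decreases up to sigma^2/2 and increases afterwards.  Call a lattice value k
  central if |k - sigma^2/2| < 1: there are at most two such k, namely r and r + 1, so u k >= Delta.
  Every non-central k owns the unit interval next to it on the side facing sigma^2/2; u is at
  most u k on it, and the intervals of distinct non-central values are disjoint.

  Group the lattice points x by the set T of their non-central coordinates, |T| = q.  The central
  coordinates take at most 2^(n-q) values and contribute at least (n-q) Delta to the sum, so the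
  non-central part lies in the sublevel set of level D - (n-q) Delta in q dimensions.  The unit
  cubes built from the cells of the non-central coordinates are disjoint and lie in X_q, hence
  there are at most Vol(X_q) of them.  Summing over the binomial(n, q) sets T gives the bound.
*)
theory Submission
  imports Defs
begin

lemma u_pos_eq:
  assumes "\<sigma> > 0" "x > 0"
  shows "u \<sigma> x = x / 2 * (ln (2 * x / \<sigma>\<^sup>2) - 1)"
  using assms by (simp add: u_def ln_mult ln_div ln_realpow algebra_simps)

lemma has_real_derivative_u:
  assumes "\<sigma> > 0" "x > 0"
  shows "(u \<sigma> has_real_derivative ln (2 * x / \<sigma>\<^sup>2) / 2) (at x)"
proof (rule has_field_derivative_transform_within_open[where S = "{0<..}"])
  show "((\<lambda>y. y / 2 * (ln (2 * y / \<sigma>\<^sup>2) - 1)) has_real_derivative ln (2 * x / \<sigma>\<^sup>2) / 2) (at x)"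
    using assms by (auto intro!: derivative_eq_intros simp: field_simps)
qed (use assms u_pos_eq in auto)

lemma u_antimono:
  assumes "\<sigma> > 0" "0 \<le> a" "a \<le> b" "b \<le> \<sigma>\<^sup>2 / 2"
  shows "u \<sigma> b \<le> u \<sigma> a"
proof (cases "a = 0")
  case True
  show ?thesis
  proof (cases "b = 0")
    case False
    with assms have "b > 0" by simp
    with assms have "ln (2 * b / \<sigma>\<^sup>2) \<le> 0" by (simp add: field_simps)
    then have "u \<sigma> b \<le> 0"
      using \<open>b > 0\<close> assms by (simp only: u_pos_eq) (intro mult_nonneg_nonpos; linarith)
    then show ?thesis using True by (simp add: u_def)
  qed (use True in simp)
next
  case False
  with assms have "a > 0" by simp
  show ?thesis
  proof (rule DERIV_nonpos_imp_nonincreasing[OF \<open>a \<le> b\<close>])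
    fix x assume "a \<le> x" "x \<le> b"
    with \<open>a > 0\<close> assms have "x > 0" "ln (2 * x / \<sigma>\<^sup>2) \<le> 0" by (simp_all add: field_simps)
    then show "\<exists>y. (u \<sigma> has_real_derivative y) (at x) \<and> y \<le> 0"
      using assms has_real_derivative_u by fastforce
  qed
qed

lemma u_mono:
  assumes "\<sigma> > 0" "\<sigma>\<^sup>2 / 2 \<le> a" "a \<le> b"
  shows "u \<sigma> a \<le> u \<sigma> b"
proof (rule DERIV_nonneg_imp_nondecreasing[OF \<open>a \<le> b\<close>])
  fix x assume "a \<le> x" "x \<le> b"
  with assms have "x > 0" "1 \<le> 2 * x / \<sigma>\<^sup>2"
    by (auto simp: field_simps intro: less_le_trans[of 0 "\<sigma>\<^sup>2 / 2"])
  then show "\<exists>y. (u \<sigma> has_real_derivative y) (at x) \<and> 0 \<le> y"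
    using assms has_real_derivative_u ln_ge_zero by fastforce
qed

definition central :: "real \<Rightarrow> nat set" where
  "central \<sigma> = {k. \<bar>real k - \<sigma>\<^sup>2 / 2\<bar> < 1}"

definition cell :: "real \<Rightarrow> nat \<Rightarrow> real set" where
  "cell \<sigma> k = (if real k < \<sigma>\<^sup>2 / 2 then {real k..<real k + 1} else {real k - 1<..real k})"

lemma central_subset: "central \<sigma> \<subseteq> {nat \<lfloor>\<sigma>\<^sup>2 / 2\<rfloor>, nat \<lfloor>\<sigma>\<^sup>2 / 2\<rfloor> + 1}"
proof
  fix k assume "k \<in> central \<sigma>"
  then have "\<sigma>\<^sup>2 / 2 < real k + 1" "real k - 1 \<le> \<sigma>\<^sup>2 / 2"
    by (auto simp: central_def abs_less_iff)
  then have "\<lfloor>\<sigma>\<^sup>2 / 2\<rfloor> < int k + 1" "int k - 1 \<le> \<lfloor>\<sigma>\<^sup>2 / 2\<rfloor>"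
    by (simp_all add: floor_le_iff le_floor_iff)
  then show "k \<in> {nat \<lfloor>\<sigma>\<^sup>2 / 2\<rfloor>, nat \<lfloor>\<sigma>\<^sup>2 / 2\<rfloor> + 1}" by auto
qed

lemma finite_central: "finite (central \<sigma>)"
  using central_subset by (rule finite_subset) simp

lemma card_central_le: "card (central \<sigma>) \<le> 2"
proof -
  have "card (central \<sigma>) \<le> card {nat \<lfloor>\<sigma>\<^sup>2 / 2\<rfloor>, nat \<lfloor>\<sigma>\<^sup>2 / 2\<rfloor> + 1}"
    by (rule card_mono) (simp, rule central_subset)
  then show ?thesis by simp
qed

lemma Delta_le_u_central:
  assumes "k \<in> central \<sigma>"
  shows "Delta \<sigma> \<le> u \<sigma> (real k)"
proof -
  have "k = nat \<lfloor>\<sigma>\<^sup>2 / 2\<rfloor> \<or> k = nat \<lfloor>\<sigma>\<^sup>2 / 2\<rfloor> + 1"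
    using central_subset assms by blast
  then have "real k = real_of_int \<lfloor>\<sigma>\<^sup>2 / 2\<rfloor> \<or> real k = real_of_int \<lfloor>\<sigma>\<^sup>2 / 2\<rfloor> + 1"
    by auto
  then show ?thesis unfolding Delta_def Let_def by auto
qed

lemma cell_nonneg:
  assumes "k \<notin> central \<sigma>" "t \<in> cell \<sigma> k"
  shows "0 \<le> t"
proof (cases "real k < \<sigma>\<^sup>2 / 2")
  case True
  with assms(2) show ?thesis by (simp add: cell_def)
next
  case False
  with assms have "\<sigma>\<^sup>2 / 2 + 1 \<le> real k" "real k - 1 < t"
    by (auto simp: central_def cell_def)
  then show ?thesis using zero_le_power2[of \<sigma>] by linarith
qed

lemma u_le_on_cell:
  assumes "\<sigma> > 0" "k \<notin> central \<sigma>" "t \<in> cell \<sigma> k"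
  shows "u \<sigma> t \<le> u \<sigma> (real k)"
proof (cases "real k < \<sigma>\<^sup>2 / 2")
  case True
  with assms show ?thesis by (intro u_antimono) (auto simp: central_def cell_def)
next
  case False
  with assms show ?thesis by (intro u_mono) (auto simp: central_def cell_def)
qed

lemma disjoint_cells:
  assumes "k \<notin> central \<sigma>" "k' \<notin> central \<sigma>" "k \<noteq> k'"
  shows "cell \<sigma> k \<inter> cell \<sigma> k' = {}"
proof -
  have "real k + 1 \<le> real k' \<or> real k' + 1 \<le> real k"
    using \<open>k \<noteq> k'\<close> by linarith
  with assms show ?thesis by (auto simp: central_def cell_def split: if_splits)
qed

lemma cell_in_sets: "cell \<sigma> k \<in> sets borel"
  by (simp add: cell_def)

lemma emeasure_cell: "emeasure lborel (cell \<sigma> k) = 1"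
  by (simp add: cell_def)

lemma sublevel_u_in_sets:
  assumes "finite I"
  shows "{x \<in> I \<rightarrow>\<^sub>E {0::real..}. (\<Sum>j\<in>I. u \<sigma> (x j)) < B} \<in> sets (Pi\<^sub>M I (\<lambda>_. lborel))"
proof -
  have [measurable]: "u \<sigma> \<in> borel_measurable borel"
    unfolding u_def by measurable
  have "{x \<in> I \<rightarrow>\<^sub>E {0::real..}. (\<Sum>j\<in>I. u \<sigma> (x j)) < B} =
    {x \<in> space (Pi\<^sub>M I (\<lambda>_. lborel)). (\<forall>j\<in>I. 0 \<le> x j) \<and> (\<Sum>j\<in>I. u \<sigma> (x j)) < B}"
    by (auto simp: space_PiM PiE_def Pi_def)
  also have "\<dots> \<in> sets (Pi\<^sub>M I (\<lambda>_. lborel))"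
    using assms by measurable
  finally show ?thesis .
qed

lemma card_le_emeasure_sublevel_u:
  fixes F :: "('i \<Rightarrow> nat) set"
  assumes "\<sigma> > 0" "finite I"
    and F: "F \<subseteq> {y \<in> I \<rightarrow>\<^sub>E UNIV. (\<forall>j\<in>I. y j \<notin> central \<sigma>) \<and> (\<Sum>j\<in>I. u \<sigma> (real (y j))) < B}"
  shows "ennreal (real (card F)) \<le> emeasure (Pi\<^sub>M I (\<lambda>_. lborel))
           {x \<in> I \<rightarrow>\<^sub>E {0::real..}. (\<Sum>j\<in>I. u \<sigma> (x j)) < B}"
proof (cases "finite F")
  case True
  let ?M = "Pi\<^sub>M I (\<lambda>_. lborel)"
  define cube where "cube y = (\<Pi>\<^sub>E j\<in>I. cell \<sigma> (y j))" for y :: "'i \<Rightarrow> nat"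
  have cube_sets: "cube y \<in> sets ?M" for y
    unfolding cube_def by (rule sets_PiM_I_finite) (simp_all add: \<open>finite I\<close> cell_in_sets)
  have emeasure_cube: "emeasure ?M (cube y) = 1" for y
    unfolding cube_def using \<open>finite I\<close>
    by (simp add: product_sigma_finite.emeasure_PiM product_sigma_finite_def emeasure_cell cell_in_sets
        lborel.sigma_finite_measure_axioms)
  have "disjoint_family_on cube F"
    unfolding disjoint_family_on_def
  proof (intro ballI impI)
    fix y y' assume "y \<in> F" "y' \<in> F" "y \<noteq> y'"
    then obtain j where "j \<in> I" "y j \<noteq> y' j"
      using F PiE_ext[of y I "\<lambda>_. UNIV" y'] by blast
    then have "cell \<sigma> (y j) \<inter> cell \<sigma> (y' j) = {}"
      using F \<open>y \<in> F\<close> \<open>y' \<in> F\<close> by (intro disjoint_cells) auto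
    then show "cube y \<inter> cube y' = {}"
      using \<open>j \<in> I\<close> by (auto simp: cube_def PiE_def Pi_def)
  qed
  moreover have "(\<Union>y\<in>F. cube y) \<subseteq> {x \<in> I \<rightarrow>\<^sub>E {0..}. (\<Sum>j\<in>I. u \<sigma> (x j)) < B}"
  proof
    fix x assume "x \<in> (\<Union>y\<in>F. cube y)"
    then obtain y where "y \<in> F" "x \<in> cube y" by blast
    then have cell: "j \<in> I \<Longrightarrow> y j \<notin> central \<sigma> \<and> x j \<in> cell \<sigma> (y j)" for j
      using F by (auto simp: cube_def)
    have "(\<Sum>j\<in>I. u \<sigma> (x j)) \<le> (\<Sum>j\<in>I. u \<sigma> (real (y j)))"
      using cell u_le_on_cell[OF \<open>\<sigma> > 0\<close>] by (intro sum_mono) blast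
    also have "\<dots> < B"
      using F \<open>y \<in> F\<close> by auto
    finally have "(\<Sum>j\<in>I. u \<sigma> (x j)) < B" .
    moreover have "x \<in> I \<rightarrow>\<^sub>E {0..}"
      using \<open>x \<in> cube y\<close> cell cell_nonneg by (auto simp: cube_def PiE_iff)
    ultimately show "x \<in> {x \<in> I \<rightarrow>\<^sub>E {0..}. (\<Sum>j\<in>I. u \<sigma> (x j)) < B}" by simp
  qed
  ultimately have "emeasure ?M (\<Union>y\<in>F. cube y) \<le> emeasure ?M {x \<in> I \<rightarrow>\<^sub>E {0..}. (\<Sum>j\<in>I. u \<sigma> (x j)) < B}"
    by (intro emeasure_mono sublevel_u_in_sets \<open>finite I\<close>)
  moreover have "emeasure ?M (\<Union>y\<in>F. cube y) = ennreal (real (card F))"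
    using \<open>disjoint_family_on cube F\<close> \<open>finite F\<close> cube_sets
    by (subst sum_emeasure[symmetric]) (auto simp: emeasure_cube ennreal_of_nat_eq_real_of_nat)
  ultimately show ?thesis by simp
qed simp

lemma card_le_card_image_times_card:
  assumes "inj_on (\<lambda>x. (f x, g x)) A" "g ` A \<subseteq> V" "finite V"
  shows "card A \<le> card (f ` A) * card V"
proof (cases "finite A")
  case True
  have "card A = card ((\<lambda>x. (f x, g x)) ` A)"
    using assms(1) by (simp add: card_image)
  also have "\<dots> \<le> card (f ` A \<times> V)"
    using True assms(2,3) by (intro card_mono) auto
  finally show ?thesis by (simp add: card_cartesian_product)
qed simp

lemma sum_u_noncentral_less:
  assumes "finite A" "T \<subseteq> A" "\<forall>i\<in>A - T. x i \<in> central \<sigma>"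
    and "(\<Sum>i\<in>A. u \<sigma> (real (x i))) < D"
  shows "(\<Sum>i\<in>T. u \<sigma> (real (x i))) < D - real (card (A - T)) * Delta \<sigma>"
proof -
  have "real (card (A - T)) * Delta \<sigma> = (\<Sum>i\<in>A - T. Delta \<sigma>)"
    by simp
  also have "\<dots> \<le> (\<Sum>i\<in>A - T. u \<sigma> (real (x i)))"
    using assms(3) Delta_le_u_central by (intro sum_mono) auto
  also have "\<dots> = (\<Sum>i\<in>A. u \<sigma> (real (x i))) - (\<Sum>i\<in>T. u \<sigma> (real (x i)))"
    using sum.subset_diff[OF assms(2,1), of "\<lambda>i. u \<sigma> (real (x i))"] by simp
  finally show ?thesis
    using assms(4) by linarith
qed

lemma inj_on_restrict_comp_restrict:
  assumes "T \<subseteq> g ` J"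
  shows "inj_on (\<lambda>x. (restrict (x \<circ> g) J, restrict x (I - T))) (I \<rightarrow>\<^sub>E S)"
proof (rule inj_onI)
  fix x y assume x: "x \<in> I \<rightarrow>\<^sub>E S" and y: "y \<in> I \<rightarrow>\<^sub>E S"
    and eq: "(restrict (x \<circ> g) J, restrict x (I - T)) = (restrict (y \<circ> g) J, restrict y (I - T))"
  show "x = y"
  proof (rule PiE_ext[OF x y])
    fix i assume "i \<in> I"
    show "x i = y i"
    proof (cases "i \<in> T")
      case True
      with assms obtain j where "j \<in> J" "i = g j"
        by blast
      moreover have "restrict (x \<circ> g) J j = restrict (y \<circ> g) J j"
        using eq by simp
      ultimately show ?thesis
        by simp
    next
      case False
      have "restrict x (I - T) i = restrict y (I - T) i"
        using eq by simp
      with \<open>i \<in> I\<close> False show ?thesis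
        by simp
    qed
  qed
qed

lemma restrict_comp_in_noncentral_sublevel:
  assumes g: "bij_betw g {..<q} T" and "T \<subseteq> {..<n}"
    and x: "{j \<in> {..<n}. x j \<notin> central \<sigma>} = T" "(\<Sum>j<n. u \<sigma> (real (x j))) < D"
  shows "restrict (x \<circ> g) {..<q} \<in> {y \<in> {..<q} \<rightarrow>\<^sub>E UNIV. (\<forall>j\<in>{..<q}. y j \<notin> central \<sigma>) \<and>
           (\<Sum>j\<in>{..<q}. u \<sigma> (real (y j))) < D - real (n - q) * Delta \<sigma>}"
proof -
  have "g j \<in> T" if "j < q" for j
    using g that by (auto simp: bij_betw_def)
  with x(1) have "\<forall>j\<in>{..<q}. x (g j) \<notin> central \<sigma>"
    by auto
  moreover have "(\<Sum>j<q. u \<sigma> (real (x (g j)))) = (\<Sum>i\<in>T. u \<sigma> (real (x i)))"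
    using sum.reindex_bij_betw[OF g, of "\<lambda>i. u \<sigma> (real (x i))"] by simp
  moreover have "card ({..<n} - T) = n - q"
    using \<open>T \<subseteq> {..<n}\<close> bij_betw_same_card[OF g] by (simp add: card_Diff_subset finite_subset)
  moreover have "(\<Sum>i\<in>T. u \<sigma> (real (x i))) < D - real (card ({..<n} - T)) * Delta \<sigma>"
    using x \<open>T \<subseteq> {..<n}\<close> by (intro sum_u_noncentral_less) auto
  ultimately show ?thesis
    by simp
qed

lemma card_noncentral_fibre_le:
  fixes n :: nat and D :: real
  assumes "\<sigma> > 0" "T \<subseteq> {..<n}"
  shows "ennreal (real (card {x \<in> {..<n} \<rightarrow>\<^sub>E (UNIV :: nat set).
            (\<Sum>j<n. u \<sigma> (real (x j))) < D \<and> {j \<in> {..<n}. x j \<notin> central \<sigma>} = T}))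
         \<le> ennreal (2 ^ (n - card T)) * emeasure (Pi\<^sub>M {..<card T} (\<lambda>_. lborel))
              {x \<in> {..<card T} \<rightarrow>\<^sub>E {0::real..}.
                 (\<Sum>j<card T. u \<sigma> (x j)) < D - real (n - card T) * Delta \<sigma>}"
proof -
  define q where "q = card T"
  define A where "A = {x \<in> {..<n} \<rightarrow>\<^sub>E (UNIV :: nat set).
    (\<Sum>j<n. u \<sigma> (real (x j))) < D \<and> {j \<in> {..<n}. x j \<notin> central \<sigma>} = T}"
  have "finite T"
    using assms(2) finite_subset by blast
  then obtain g where g: "bij_betw g {..<q} T"
    unfolding q_def by (metis ex_bij_betw_nat_finite lessThan_atLeast0)
  define shrink where "shrink x = restrict (x \<circ> g) {..<q}" for x :: "nat \<Rightarrow> nat"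
  have card_rest: "card ({..<n} - T) = n - q"
    using assms(2) \<open>finite T\<close> by (simp add: q_def card_Diff_subset)
  have central_off_T: "x i \<in> central \<sigma>" if "x \<in> A" "i \<in> {..<n} - T" for x i
    using that unfolding A_def by blast
  have "inj_on (\<lambda>x. (shrink x, restrict x ({..<n} - T))) A"
    unfolding shrink_def using g
    by (intro inj_on_subset[OF inj_on_restrict_comp_restrict]) (auto simp: bij_betw_def A_def)
  moreover have "(\<lambda>x. restrict x ({..<n} - T)) ` A \<subseteq> ({..<n} - T) \<rightarrow>\<^sub>E central \<sigma>"
    using central_off_T by (intro image_subsetI) (simp add: restrict_PiE_iff)
  ultimately have "card A \<le> card (shrink ` A) * card (({..<n} - T) \<rightarrow>\<^sub>E central \<sigma>)"
    by (rule card_le_card_image_times_card) (simp add: finite_PiE finite_central)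
  also have "\<dots> \<le> card (shrink ` A) * 2 ^ (n - q)"
    using card_rest card_central_le by (simp add: card_PiE power_mono)
  finally have card_A: "card A \<le> card (shrink ` A) * 2 ^ (n - q)" .
  have "shrink ` A \<subseteq> {y \<in> {..<q} \<rightarrow>\<^sub>E UNIV. (\<forall>j\<in>{..<q}. y j \<notin> central \<sigma>) \<and>
          (\<Sum>j\<in>{..<q}. u \<sigma> (real (y j))) < D - real (n - q) * Delta \<sigma>}"
    unfolding shrink_def A_def using g assms(2)
    by (intro image_subsetI restrict_comp_in_noncentral_sublevel) auto
  then have lattice: "ennreal (real (card (shrink ` A))) \<le> emeasure (Pi\<^sub>M {..<q} (\<lambda>_. lborel))
      {x \<in> {..<q} \<rightarrow>\<^sub>E {0::real..}. (\<Sum>j<q. u \<sigma> (x j)) < D - real (n - q) * Delta \<sigma>}"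
    by (intro card_le_emeasure_sublevel_u assms(1)) auto
  have "ennreal (real (card A)) \<le> ennreal (2 ^ (n - q)) * ennreal (real (card (shrink ` A)))"
    using of_nat_mono[OF card_A, where 'a=real]
    by (simp add: ennreal_mult'[symmetric] mult.commute ennreal_leI)
  also have "\<dots> \<le> ennreal (2 ^ (n - q)) * emeasure (Pi\<^sub>M {..<q} (\<lambda>_. lborel))
      {x \<in> {..<q} \<rightarrow>\<^sub>E {0::real..}. (\<Sum>j<q. u \<sigma> (x j)) < D - real (n - q) * Delta \<sigma>}"
    by (intro mult_left_mono lattice) simp
  finally show ?thesis
    unfolding A_def q_def .
qed

lemma card_le_sum_card_fibres:
  assumes "finite B" "f ` A \<subseteq> B"
  shows "card A \<le> (\<Sum>b\<in>B. card {x \<in> A. f x = b})"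
proof (cases "finite A")
  case True
  then show ?thesis
    using sum.group[OF True assms, of "\<lambda>_. 1 :: nat"] by simp
qed simp

lemma sum_Pow_card:
  assumes "finite A"
  shows "(\<Sum>T\<in>Pow A. f (card T)) = (\<Sum>q\<le>card A. of_nat (card A choose q) * f q)"
proof -
  have "(\<Sum>T\<in>Pow A. f (card T)) = (\<Sum>q\<le>card A. \<Sum>T\<in>{T \<in> Pow A. card T = q}. f (card T))"
    using assms by (intro sum.group[symmetric]) (auto intro: card_mono)
  also have "\<dots> = (\<Sum>q\<le>card A. of_nat (card A choose q) * f q)"
    using n_subsets[OF assms] by (intro sum.cong) (simp_all add: Pow_def)
  finally show ?thesis .
qed

theorem lemma11:
  fixes \<sigma> \<epsilon> :: real and n :: nat
  assumes "\<sigma> > 0" and "\<epsilon> > 0"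
  shows "ennreal (real (card {x \<in> {..<n} \<rightarrow>\<^sub>E (UNIV :: nat set).
            (\<Sum>j<n. u \<sigma> (real (x j))) < ln (1 / \<epsilon>) + real n * ln 8}))
         \<le> (\<Sum>q\<le>n. ennreal (2 ^ (n - q) * real (n choose (n - q)))
               * emeasure (Pi\<^sub>M {..<q} (\<lambda>_. lborel))
                   {x \<in> {..<q} \<rightarrow>\<^sub>E {0::real..}.
                      (\<Sum>j<q. u \<sigma> (x j)) < ln (1 / \<epsilon>) + real n * ln 8 - real (n - q) * Delta \<sigma>})"
proof -
  define D where "D = ln (1 / \<epsilon>) + real n * ln 8"
  define N where "N = {x \<in> {..<n} \<rightarrow>\<^sub>E (UNIV :: nat set). (\<Sum>j<n. u \<sigma> (real (x j))) < D}"
  define vol where "vol q = emeasure (Pi\<^sub>M {..<q} (\<lambda>_. lborel))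
    {x \<in> {..<q} \<rightarrow>\<^sub>E {0::real..}. (\<Sum>j<q. u \<sigma> (x j)) < D - real (n - q) * Delta \<sigma>}" for q
  define noncentral where "noncentral x = {j \<in> {..<n}. x j \<notin> central \<sigma>}" for x :: "nat \<Rightarrow> nat"
  have card_N: "card N \<le> (\<Sum>T\<in>Pow {..<n}. card {x \<in> N. noncentral x = T})"
    by (rule card_le_sum_card_fibres) (auto simp: noncentral_def)
  have "ennreal (real (card N)) \<le> (\<Sum>T\<in>Pow {..<n}. ennreal (real (card {x \<in> N. noncentral x = T})))"
    using ennreal_leI[OF of_nat_mono[OF card_N, where 'a=real]] by (simp add: of_nat_sum sum_ennreal)
  also have "\<dots> \<le> (\<Sum>T\<in>Pow {..<n}. ennreal (2 ^ (n - card T)) * vol (card T))"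
    unfolding N_def noncentral_def vol_def
    using card_noncentral_fibre_le[OF \<open>\<sigma> > 0\<close>] by (intro sum_mono) simp
  also have "\<dots> = (\<Sum>q\<le>n. of_nat (n choose q) * (ennreal (2 ^ (n - q)) * vol q))"
    using sum_Pow_card[of "{..<n}" "\<lambda>q. ennreal (2 ^ (n - q)) * vol q"] by simp
  also have "\<dots> = (\<Sum>q\<le>n. ennreal (2 ^ (n - q) * real (n choose (n - q))) * vol q)"
    by (intro sum.cong refl) (simp add: binomial_symmetric[symmetric] ennreal_mult
        ennreal_of_nat_eq_real_of_nat mult_ac)
  finally show ?thesis
    unfolding N_def vol_def D_def .
qed

end
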